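(* Let $G$ be a connected graph, let $\mathcal{P}=(X_1,\ldots,X_l)$ be a path decomposition of $G$ of width $k\leq 3$, and let $S$ be a bottleneck set. Then $t_1(S)$ and $t_2(S)$ are well-defined (the sets over which the minimum and maximum are taken are nonempty) and $t_1(S)\leq t_2(S)$, so $I(S)$ is nonempty; moreover: (i) there is at least one green $S$-branch; (ii) the number of $S$-branches colored red, purple or gray is at most $2k$; (iii) the number of $S$-branches colored blue, purple or black is at most $2k$.
   Context: A path decomposition of $G$ is a sequence $(X_1,\ldots,X_l)$ of subsets of $V(G)$ covering $V(G)$, such that every edge lies in some $X_i$, and $X_i\cap X_k\subseteq X_j$ whenever $i\leq j\leq k$; width is $\max_i|X_i|-1$. For a subgraph $H$, $\alpha(H)=\min\{i: X_i\cap V(H)\neq\emptyset\}$, $\beta(H)=\max\{i: X_i\cap V(H)\neq\emptyset\}$. For $S\subseteq V(G)$, an $S$-component is a connected component $H$ of $G-S$ such that every vertex of $S$ has a neighbor in $V(H)$; an $S$-branch is an $S$-component with at least two vertices. $S$ is a bottleneck set if $S\neq\emptyset$ and there are at least $13$ $S$-branches. Define $t_1(S)=\min\{\alpha(H): H \text{ an } S\text{-branch with } S\subseteq X_{\alpha(H)}\cap X_{\alpha(H)-1}\}$ and $t_2(S)=\max\{\beta(H): H \text{ an } S\text{-branch with } S\subseteq X_{\beta(H)}\cap X_{\beta(H)+1}\}$ (with $X_0=X_{l+1}=\emptyset$), and $I(S)=\{t_1(S),\ldots,t_2(S)\}$. Each $S$-branch $H$ is colored: green if $t_1(S)\leq\alpha(H)\leq\beta(H)\leq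 t_2(S)$; red if $\alpha(H)<t_1(S)\leq\beta(H)\leq t_2(S)$; blue if $t_1(S)\leq\alpha(H)\leq t_2(S)<\beta(H)$; purple if $\alpha(H)<t_1(S)\leq t_2(S)<\beta(H)$; gray if $\beta(H)<t_1(S)$; black if $\alpha(H)>t_2(S)$. *)

theory Defs
  imports Main
begin

definition graph :: "'a set \<Rightarrow> ('a \<Rightarrow> 'a \<Rightarrow> bool) \<Rightarrow> bool" where
  "graph V E \<longleftrightarrow> finite V \<and> (\<forall>u v. E u v \<longrightarrow> u \<in> V \<and> v \<in> V)
     \<and> (\<forall>u v. E u v \<longrightarrow> E v u) \<and> (\<forall>u. \<not> E u u)"

definition conn_in :: "('a \<Rightarrow> 'a \<Rightarrow> bool) \<Rightarrow> 'a set \<Rightarrow> 'a \<Rightarrow> 'a \<Rightarrow> bool" where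
  "conn_in E A = (\<lambda>x y. E x y \<and> x \<in> A \<and> y \<in> A)\<^sup>*\<^sup>*"

definition connected_graph :: "'a set \<Rightarrow> ('a \<Rightarrow> 'a \<Rightarrow> bool) \<Rightarrow> bool" where
  "connected_graph V E \<longleftrightarrow> V \<noteq> {} \<and> (\<forall>u\<in>V. \<forall>v\<in>V. conn_in E V u v)"

definition component_of :: "'a set \<Rightarrow> ('a \<Rightarrow> 'a \<Rightarrow> bool) \<Rightarrow> 'a set \<Rightarrow> 'a set \<Rightarrow> bool" where
  "component_of V E S C \<longleftrightarrow> (\<exists>v \<in> V - S. C = {u. conn_in E (V - S) v u})"

definition S_component :: "'a set \<Rightarrow> ('a \<Rightarrow> 'a \<Rightarrow> bool) \<Rightarrow> 'a set \<Rightarrow> 'a set \<Rightarrow> bool" where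
  "S_component V E S C \<longleftrightarrow> component_of V E S C \<and> (\<forall>s\<in>S. \<exists>c\<in>C. E s c)"

definition S_branch :: "'a set \<Rightarrow> ('a \<Rightarrow> 'a \<Rightarrow> bool) \<Rightarrow> 'a set \<Rightarrow> 'a set \<Rightarrow> bool" where
  "S_branch V E S C \<longleftrightarrow> S_component V E S C \<and> card C \<ge> 2"

definition bottleneck :: "'a set \<Rightarrow> ('a \<Rightarrow> 'a \<Rightarrow> bool) \<Rightarrow> 'a set \<Rightarrow> bool" where
  "bottleneck V E S \<longleftrightarrow> S \<noteq> {} \<and> S \<subseteq> V \<and> card {C. S_branch V E S C} \<ge> 13"

definition path_decomposition ::
  "'a set \<Rightarrow> ('a \<Rightarrow> 'a \<Rightarrow> bool) \<Rightarrow> (nat \<Rightarrow> 'a set) \<Rightarrow> nat \<Rightarrow> bool" where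
  "path_decomposition V E X l \<longleftrightarrow>
     (\<forall>i\<in>{1..l}. X i \<subseteq> V) \<and> (\<Union>i\<in>{1..l}. X i) = V
     \<and> (\<forall>u v. E u v \<longrightarrow> (\<exists>i\<in>{1..l}. u \<in> X i \<and> v \<in> X i))
     \<and> (\<forall>i j k. 1 \<le> i \<and> i \<le> j \<and> j \<le> k \<and> k \<le> l \<longrightarrow> X i \<inter> X k \<subseteq> X j)"

definition pd_width :: "(nat \<Rightarrow> 'a set) \<Rightarrow> nat \<Rightarrow> nat" where
  "pd_width X l = Max ((\<lambda>i. card (X i)) ` {1..l}) - 1"

text \<open>Bags with the convention X_0 = X_(l+1) = {} (and empty outside 1..l).\<close>
definition bag :: "(nat \<Rightarrow> 'a set) \<Rightarrow> nat \<Rightarrow> nat \<Rightarrow> 'a set" where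
  "bag X l i = (if 1 \<le> i \<and> i \<le> l then X i else {})"

definition alpha :: "(nat \<Rightarrow> 'a set) \<Rightarrow> nat \<Rightarrow> 'a set \<Rightarrow> nat" where
  "alpha X l H = Min {i\<in>{1..l}. X i \<inter> H \<noteq> {}}"

definition beta :: "(nat \<Rightarrow> 'a set) \<Rightarrow> nat \<Rightarrow> 'a set \<Rightarrow> nat" where
  "beta X l H = Max {i\<in>{1..l}. X i \<inter> H \<noteq> {}}"

definition T1set :: "'a set \<Rightarrow> ('a \<Rightarrow> 'a \<Rightarrow> bool) \<Rightarrow> (nat \<Rightarrow> 'a set) \<Rightarrow> nat \<Rightarrow> 'a set \<Rightarrow> nat set" where
  "T1set V E X l S = {alpha X l H | H. S_branch V E S H \<and>
      S \<subseteq> bag X l (alpha X l H) \<inter> bag X l (alpha X l H - 1)}"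

definition T2set :: "'a set \<Rightarrow> ('a \<Rightarrow> 'a \<Rightarrow> bool) \<Rightarrow> (nat \<Rightarrow> 'a set) \<Rightarrow> nat \<Rightarrow> 'a set \<Rightarrow> nat set" where
  "T2set V E X l S = {beta X l H | H. S_branch V E S H \<and>
      S \<subseteq> bag X l (beta X l H) \<inter> bag X l (beta X l H + 1)}"

definition t1 :: "'a set \<Rightarrow> ('a \<Rightarrow> 'a \<Rightarrow> bool) \<Rightarrow> (nat \<Rightarrow> 'a set) \<Rightarrow> nat \<Rightarrow> 'a set \<Rightarrow> nat" where
  "t1 V E X l S = Min (T1set V E X l S)"

definition t2 :: "'a set \<Rightarrow> ('a \<Rightarrow> 'a \<Rightarrow> bool) \<Rightarrow> (nat \<Rightarrow> 'a set) \<Rightarrow> nat \<Rightarrow> 'a set \<Rightarrow> nat" where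
  "t2 V E X l S = Max (T2set V E X l S)"

definition I_S :: "'a set \<Rightarrow> ('a \<Rightarrow> 'a \<Rightarrow> bool) \<Rightarrow> (nat \<Rightarrow> 'a set) \<Rightarrow> nat \<Rightarrow> 'a set \<Rightarrow> nat set" where
  "I_S V E X l S = {t1 V E X l S .. t2 V E X l S}"

definition green where
  "green V E X l S H \<longleftrightarrow> t1 V E X l S \<le> alpha X l H \<and> alpha X l H \<le> beta X l H \<and> beta X l H \<le> t2 V E X l S"
definition red where
  "red V E X l S H \<longleftrightarrow> alpha X l H < t1 V E X l S \<and> t1 V E X l S \<le> beta X l H \<and> beta X l H \<le> t2 V E X l S"
definition blue where
  "blue V E X l S H \<longleftrightarrow> t1 V E X l S \<le> alpha X l H \<and> alpha X l H \<le> t2 V E X l S \<and> t2 V E X l S < beta X l H"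
definition purple where
  "purple V E X l S H \<longleftrightarrow> alpha X l H < t1 V E X l S \<and> t1 V E X l S \<le> t2 V E X l S \<and> t2 V E X l S < beta X l H"
definition gray where
  "gray V E X l S H \<longleftrightarrow> beta X l H < t1 V E X l S"
definition black where
  "black V E X l S H \<longleftrightarrow> alpha X l H > t2 V E X l S"

end

theory Submission
  imports Defs
begin

text \<open>
  Let p be the last bag in which some vertex of S appears for the first time and q the first
  bag in which some vertex of S appears for the last time. Every S-branch H has a neighbour of
  each vertex of S, so \<open>\<alpha>(H) \<le> q\<close> and \<open>p \<le> \<beta>(H)\<close>; since H is connected, the bags meeting H form
  an interval. Hence all branches with \<open>\<alpha>(H) \<le> p\<close> meet the bag \<open>X\<^sub>p\<close>, and being disjoint they
  contribute distinct vertices of \<open>X\<^sub>p - S\<close>; there are at most k of them, since \<open>X\<^sub>p\<close> also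
  contains a vertex of S. Likewise at most k branches have \<open>\<beta>(H) \<ge> q\<close>. With more than 2k
  branches some branch H lies strictly between p and q; there S is contained in every bag, so
  \<open>\<alpha>(H)\<close> witnesses \<open>t\<^sub>1\<close> and \<open>\<beta>(H)\<close> witnesses \<open>t\<^sub>2\<close>, and H is green. A branch with \<open>\<alpha>(H) < t\<^sub>1\<close>
  cannot have \<open>\<alpha>(H) > p\<close>, which bounds the red, purple and gray branches by k; symmetrically for
  blue, purple and black.
\<close>

lemma conn_in_sym:
  assumes sym: "\<And>u v. E u v \<Longrightarrow> E v u" and "conn_in E A x y"
  shows "conn_in E A y x"
  using assms(2) unfolding conn_in_def
proof (induction rule: rtranclp_induct)
  case (step y z)
  then show ?case using sym by (blast intro: converse_rtranclp_into_rtranclp)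
qed simp

lemma conn_in_trans: "conn_in E A x y \<Longrightarrow> conn_in E A y z \<Longrightarrow> conn_in E A x z"
  unfolding conn_in_def by (rule rtranclp_trans)

lemma conn_in_mem: "conn_in E A v u \<Longrightarrow> v \<in> A \<Longrightarrow> u \<in> A"
  unfolding conn_in_def by (induction rule: rtranclp_induct) auto

lemma reachable_set_eq:
  assumes "\<And>u v. E u v \<Longrightarrow> E v u" and "conn_in E A v x"
  shows "{u. conn_in E A v u} = {u. conn_in E A x u}"
proof -
  have "conn_in E A x v" by (rule conn_in_sym[OF assms])
  then show ?thesis using assms(2) by (auto intro: conn_in_trans)
qed

definition meeting_bags :: "(nat \<Rightarrow> 'a set) \<Rightarrow> nat \<Rightarrow> 'a set \<Rightarrow> nat set" where
  "meeting_bags X l H = {i\<in>{1..l}. X i \<inter> H \<noteq> {}}"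

lemma finite_meeting_bags: "finite (meeting_bags X l H)"
  unfolding meeting_bags_def by simp

lemma alpha_le: "i \<in> meeting_bags X l H \<Longrightarrow> alpha X l H \<le> i"
  unfolding alpha_def meeting_bags_def[symmetric] by (rule Min_le[OF finite_meeting_bags])

lemma beta_ge: "i \<in> meeting_bags X l H \<Longrightarrow> i \<le> beta X l H"
  unfolding beta_def meeting_bags_def[symmetric] by (rule Max_ge[OF finite_meeting_bags])

lemma alpha_in_meeting_bags: "meeting_bags X l H \<noteq> {} \<Longrightarrow> alpha X l H \<in> meeting_bags X l H"
  unfolding alpha_def meeting_bags_def[symmetric] by (rule Min_in[OF finite_meeting_bags])

lemma beta_in_meeting_bags: "meeting_bags X l H \<noteq> {} \<Longrightarrow> beta X l H \<in> meeting_bags X l H"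
  unfolding beta_def meeting_bags_def[symmetric] by (rule Max_in[OF finite_meeting_bags])

lemma alpha_le_beta: "meeting_bags X l H \<noteq> {} \<Longrightarrow> alpha X l H \<le> beta X l H"
  using alpha_in_meeting_bags beta_ge by blast

locale path_decomposed_graph =
  fixes V :: "'a set" and E :: "'a \<Rightarrow> 'a \<Rightarrow> bool" and X :: "nat \<Rightarrow> 'a set" and l :: nat
  assumes graph: "graph V E" and decomposition: "path_decomposition V E X l"
begin

lemma finite_vertices: "finite V"
  using graph unfolding graph_def by blast

lemma edge_sym: "E u v \<Longrightarrow> E v u"
  using graph unfolding graph_def by blast

lemma bag_subset: "i \<in> {1..l} \<Longrightarrow> X i \<subseteq> V"
  using decomposition unfolding path_decomposition_def by blast

lemma finite_bag: "i \<in> {1..l} \<Longrightarrow> finite (X i)"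
  using bag_subset finite_vertices finite_subset by blast

lemma vertex_in_bag: "v \<in> V \<Longrightarrow> \<exists>i\<in>{1..l}. v \<in> X i"
  using decomposition unfolding path_decomposition_def by blast

lemma edge_in_bag: "E u v \<Longrightarrow> \<exists>i\<in>{1..l}. u \<in> X i \<and> v \<in> X i"
  using decomposition unfolding path_decomposition_def by blast

lemma bag_interpolate:
  assumes "1 \<le> i" "i \<le> j" "j \<le> k" "k \<le> l" "v \<in> X i" "v \<in> X k"
  shows "v \<in> X j"
  using decomposition assms unfolding path_decomposition_def by blast

lemma card_bag_le_width:
  assumes "i \<in> {1..l}"
  shows "card (X i) \<le> pd_width X l + 1"
proof -
  have "card (X i) \<le> Max ((\<lambda>i. card (X i)) ` {1..l})"
    using assms by (intro Max_ge) auto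
  then show ?thesis unfolding pd_width_def by linarith
qed

lemma meeting_bags_nonempty: "H \<subseteq> V \<Longrightarrow> H \<noteq> {} \<Longrightarrow> meeting_bags X l H \<noteq> {}"
  unfolding meeting_bags_def using vertex_in_bag by blast

text \<open>Deleting the bag \<open>X\<^sub>j\<close> separates the bags before j from the bags after it.\<close>

lemma edge_avoiding_bag_stays_left:
  assumes "E x y" "x \<notin> X j" "y \<notin> X j"
  shows "(\<exists>m. 1 \<le> m \<and> m < j \<and> x \<in> X m) \<longleftrightarrow> (\<exists>m. 1 \<le> m \<and> m < j \<and> y \<in> X m)"
proof -
  obtain m where m: "m \<in> {1..l}" "x \<in> X m" "y \<in> X m"
    using edge_in_bag[OF assms(1)] by blast
  have "m \<noteq> j" using m assms by auto
  show ?thesis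
  proof (cases "m < j")
    case False
    have "\<not> (\<exists>m'. 1 \<le> m' \<and> m' < j \<and> z \<in> X m')" if "z \<in> X m" "z \<notin> X j" for z
      using bag_interpolate[of _ j m z] that m(1) False \<open>m \<noteq> j\<close> by fastforce
    then show ?thesis using m assms by blast
  qed (use m in auto)
qed

lemma reachable_meeting_bags_interval:
  assumes H: "H = {u. conn_in E A v u}"
    and i: "i \<in> meeting_bags X l H" and k: "k \<in> meeting_bags X l H" and "i \<le> j" "j \<le> k"
  shows "j \<in> meeting_bags X l H"
proof (rule ccontr)
  assume j: "j \<notin> meeting_bags X l H"
  have range: "1 \<le> i" "k \<le> l" using i k unfolding meeting_bags_def by auto
  then have avoid: "X j \<inter> H = {}" using j \<open>i \<le> j\<close> \<open>j \<le> k\<close> unfolding meeting_bags_def by auto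
  define left where "left u \<longleftrightarrow> (\<exists>m. 1 \<le> m \<and> m < j \<and> u \<in> X m)" for u
  have left_const: "left u = left v" if "conn_in E A v u" for u
    using that unfolding conn_in_def
  proof (induction rule: rtranclp_induct)
    case (step x y)
    then have "x \<in> H" "y \<in> H"
      unfolding H conn_in_def by (auto intro: rtranclp.rtrancl_into_rtrancl)
    then show ?case
      using step edge_avoiding_bag_stays_left[of x y j] avoid unfolding left_def by blast
  qed simp
  obtain u where u: "u \<in> X i" "u \<in> H" using i unfolding meeting_bags_def by auto
  obtain w where w: "w \<in> X k" "w \<in> H" using k unfolding meeting_bags_def by auto
  have "i < j" using u avoid \<open>i \<le> j\<close> by (cases "i = j") auto
  then have "left u" unfolding left_def using u range by blast
  moreover have "\<not> left w"
    unfolding left_def using bag_interpolate[of _ j k w] w avoid range \<open>j \<le> k\<close> by fastforce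
  ultimately show False using left_const u(2) w(2) unfolding H by blast
qed

lemma S_branch_reachable_set:
  assumes "S_branch V E S H"
  obtains v where "v \<in> V - S" "H = {u. conn_in E (V - S) v u}"
proof -
  have "\<exists>v\<in>V - S. H = {u. conn_in E (V - S) v u}"
    using assms unfolding S_branch_def S_component_def component_of_def by (elim conjE)
  then show ?thesis using that by blast
qed

lemma S_branch_subset:
  assumes "S_branch V E S H"
  shows "H \<subseteq> V - S"
proof -
  obtain v where v: "v \<in> V - S" and H: "H = {u. conn_in E (V - S) v u}"
    using assms by (rule S_branch_reachable_set)
  show ?thesis unfolding H using conn_in_mem[OF _ v] by blast
qed

lemma S_branch_nonempty: "S_branch V E S H \<Longrightarrow> H \<noteq> {}"
  unfolding S_branch_def by auto

lemma S_branch_neighbour: "S_branch V E S H \<Longrightarrow> s \<in> S \<Longrightarrow> \<exists>c\<in>H. E s c"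
  unfolding S_branch_def S_component_def by blast

lemma S_branches_disjoint:
  assumes "S_branch V E S H\<^sub>1" "S_branch V E S H\<^sub>2" "x \<in> H\<^sub>1" "x \<in> H\<^sub>2"
  shows "H\<^sub>1 = H\<^sub>2"
proof -
  have "H = {u. conn_in E (V - S) x u}" if branch: "S_branch V E S H" and x: "x \<in> H" for H
  proof -
    obtain v where H: "H = {u. conn_in E (V - S) v u}"
      using branch by (rule S_branch_reachable_set)
    with x have "conn_in E (V - S) v x" by simp
    from reachable_set_eq[OF edge_sym this] show ?thesis using H by simp
  qed
  from this[OF assms(1,3)] this[OF assms(2,4)] show ?thesis by simp
qed

lemma finite_S_branches: "finite {H. S_branch V E S H}"
proof -
  have "{H. S_branch V E S H} \<subseteq> Pow V" using S_branch_subset by (auto simp: subset_iff)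
  then show ?thesis by (rule finite_subset) (simp add: finite_vertices)
qed

lemma card_S_branches_mono:
  assumes "\<And>H. S_branch V E S H \<Longrightarrow> P H \<Longrightarrow> Q H"
  shows "card {H. S_branch V E S H \<and> P H} \<le> card {H. S_branch V E S H \<and> Q H}"
  using assms by (intro card_mono) (auto intro: finite_subset[OF _ finite_S_branches])

lemma meeting_bags_S_branch_nonempty:
  assumes "S_branch V E S H"
  shows "meeting_bags X l H \<noteq> {}"
proof (rule meeting_bags_nonempty)
  show "H \<subseteq> V" using S_branch_subset[OF assms] by blast
qed (rule S_branch_nonempty[OF assms])

lemma S_branch_meets_bags_between:
  assumes H: "S_branch V E S H" and "alpha X l H \<le> j" "j \<le> beta X l H"
  shows "X j \<inter> H \<noteq> {}"
proof -
  obtain v where "H = {u. conn_in E (V - S) v u}" using H by (rule S_branch_reachable_set)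
  moreover have "meeting_bags X l H \<noteq> {}" by (rule meeting_bags_S_branch_nonempty[OF H])
  ultimately have "j \<in> meeting_bags X l H"
    using reachable_meeting_bags_interval alpha_in_meeting_bags beta_in_meeting_bags assms(2,3)
    by metis
  then show ?thesis unfolding meeting_bags_def by simp
qed

lemma card_S_branches_meeting_bag:
  assumes i: "i \<in> {1..l}"
  shows "card {H. S_branch V E S H \<and> X i \<inter> H \<noteq> {}} \<le> card (X i - S)"
proof -
  let ?B = "{H. S_branch V E S H \<and> X i \<inter> H \<noteq> {}}"
  define pick where "pick H = (SOME x. x \<in> X i \<inter> H)" for H
  have pick: "pick H \<in> X i \<inter> H" if "H \<in> ?B" for H
  proof -
    have "\<exists>x. x \<in> X i \<inter> H" using that by blast
    then show ?thesis unfolding pick_def by (rule someI_ex)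
  qed
  have "inj_on pick ?B"
    by (rule inj_onI) (use pick S_branches_disjoint in \<open>metis IntE mem_Collect_eq\<close>)
  moreover have "pick ` ?B \<subseteq> X i - S" using pick S_branch_subset by blast
  ultimately show ?thesis using card_inj_on_le finite_bag[OF i] by blast
qed

lemma card_S_branches_meeting_bag_le_width:
  assumes "i \<in> {1..l}" "X i \<inter> S \<noteq> {}"
  shows "card {H. S_branch V E S H \<and> X i \<inter> H \<noteq> {}} \<le> pd_width X l"
proof -
  have "card (X i - S) < card (X i)"
    using assms finite_bag by (intro psubset_card_mono) auto
  then show ?thesis
    using card_S_branches_meeting_bag[OF assms(1), of S] card_bag_le_width[OF assms(1)] by linarith
qed

lemma S_branch_neighbour_bounds:
  assumes "S_branch V E S H" "s \<in> S"
  shows "alpha X l H \<le> beta X l {s}" and "alpha X l {s} \<le> beta X l H"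
proof -
  obtain c where "c \<in> H" "E s c" using S_branch_neighbour assms by blast
  then obtain m where "m \<in> meeting_bags X l H" "m \<in> meeting_bags X l {s}"
    using edge_in_bag unfolding meeting_bags_def by blast
  then show "alpha X l H \<le> beta X l {s}" "alpha X l {s} \<le> beta X l H"
    using alpha_le beta_ge order_trans by blast+
qed

end

locale many_branched_separator = path_decomposed_graph +
  fixes S :: "'a set"
  assumes S_nonempty: "S \<noteq> {}" and S_subset: "S \<subseteq> V"
    and many_S_branches: "2 * pd_width X l < card {H. S_branch V E S H}"
begin

definition last_entry :: nat where
  "last_entry = Max ((\<lambda>s. alpha X l {s}) ` S)"

definition first_exit :: nat where
  "first_exit = Min ((\<lambda>s. beta X l {s}) ` S)"

lemma finite_S: "finite S"
  using S_subset finite_vertices finite_subset by blast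

lemma meeting_bags_singleton_nonempty: "s \<in> S \<Longrightarrow> meeting_bags X l {s} \<noteq> {}"
  using meeting_bags_nonempty S_subset by blast

lemma last_entry_meets_S: "last_entry \<in> {1..l}" "X last_entry \<inter> S \<noteq> {}"
proof -
  have "last_entry \<in> (\<lambda>s. alpha X l {s}) ` S"
    unfolding last_entry_def using finite_S S_nonempty by (intro Max_in) auto
  then obtain s where s: "s \<in> S" and eq: "last_entry = alpha X l {s}" by blast
  have "alpha X l {s} \<in> meeting_bags X l {s}"
    by (rule alpha_in_meeting_bags[OF meeting_bags_singleton_nonempty[OF s]])
  then show "last_entry \<in> {1..l}" "X last_entry \<inter> S \<noteq> {}"
    using s unfolding eq meeting_bags_def by auto
qed

lemma first_exit_meets_S: "first_exit \<in> {1..l}" "X first_exit \<inter> S \<noteq> {}"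
proof -
  have "first_exit \<in> (\<lambda>s. beta X l {s}) ` S"
    unfolding first_exit_def using finite_S S_nonempty by (intro Min_in) auto
  then obtain s where s: "s \<in> S" and eq: "first_exit = beta X l {s}" by blast
  have "beta X l {s} \<in> meeting_bags X l {s}"
    by (rule beta_in_meeting_bags[OF meeting_bags_singleton_nonempty[OF s]])
  then show "first_exit \<in> {1..l}" "X first_exit \<inter> S \<noteq> {}"
    using s unfolding eq meeting_bags_def by auto
qed

lemma alpha_le_first_exit: "S_branch V E S H \<Longrightarrow> alpha X l H \<le> first_exit"
  unfolding first_exit_def by (simp add: Min_ge_iff finite_S S_nonempty S_branch_neighbour_bounds(1))

lemma last_entry_le_beta: "S_branch V E S H \<Longrightarrow> last_entry \<le> beta X l H"
  unfolding last_entry_def by (simp add: Max_le_iff finite_S S_nonempty S_branch_neighbour_bounds(2))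

lemma S_subset_bag:
  assumes "last_entry \<le> i" "i \<le> first_exit"
  shows "S \<subseteq> X i"
proof
  fix s assume s: "s \<in> S"
  have "alpha X l {s} \<in> meeting_bags X l {s}" "beta X l {s} \<in> meeting_bags X l {s}"
    using alpha_in_meeting_bags beta_in_meeting_bags meeting_bags_singleton_nonempty s by blast+
  moreover have "alpha X l {s} \<le> last_entry" "first_exit \<le> beta X l {s}"
    unfolding last_entry_def first_exit_def using finite_S s by auto
  ultimately show "s \<in> X i"
    using bag_interpolate[of "alpha X l {s}" i "beta X l {s}" s] assms
    unfolding meeting_bags_def by auto
qed

lemma card_early_S_branches:
  "card {H. S_branch V E S H \<and> alpha X l H \<le> last_entry} \<le> pd_width X l"
proof -
  have "card {H. S_branch V E S H \<and> alpha X l H \<le> last_entry}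
      \<le> card {H. S_branch V E S H \<and> X last_entry \<inter> H \<noteq> {}}"
    by (rule card_S_branches_mono) (simp add: S_branch_meets_bags_between last_entry_le_beta)
  also have "\<dots> \<le> pd_width X l"
    by (rule card_S_branches_meeting_bag_le_width[OF last_entry_meets_S])
  finally show ?thesis .
qed

lemma card_late_S_branches:
  "card {H. S_branch V E S H \<and> first_exit \<le> beta X l H} \<le> pd_width X l"
proof -
  have "card {H. S_branch V E S H \<and> first_exit \<le> beta X l H}
      \<le> card {H. S_branch V E S H \<and> X first_exit \<inter> H \<noteq> {}}"
    by (rule card_S_branches_mono) (simp add: S_branch_meets_bags_between alpha_le_first_exit)
  also have "\<dots> \<le> pd_width X l"
    by (rule card_S_branches_meeting_bag_le_width[OF first_exit_meets_S])
  finally show ?thesis .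
qed

lemma inner_S_branch_exists:
  "\<exists>H. S_branch V E S H \<and> last_entry < alpha X l H \<and> beta X l H < first_exit"
proof (rule ccontr)
  assume no_inner: "\<not> ?thesis"
  have "alpha X l H \<le> last_entry \<or> first_exit \<le> beta X l H" if "S_branch V E S H" for H
    using no_inner that by (meson not_le)
  then have "{H. S_branch V E S H} = {H. S_branch V E S H \<and> alpha X l H \<le> last_entry}
      \<union> {H. S_branch V E S H \<and> first_exit \<le> beta X l H}"
    by auto
  then have "card {H. S_branch V E S H} \<le> card {H. S_branch V E S H \<and> alpha X l H \<le> last_entry}
      + card {H. S_branch V E S H \<and> first_exit \<le> beta X l H}"
    by (metis card_Un_le)
  then show False using card_early_S_branches card_late_S_branches many_S_branches by linarith
qed

lemma alpha_in_T1set: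
  assumes H: "S_branch V E S H" and "last_entry < alpha X l H"
  shows "alpha X l H \<in> T1set V E X l S"
proof -
  let ?a = "alpha X l H"
  have "S \<subseteq> X ?a \<inter> X (?a - 1)"
    using S_subset_bag alpha_le_first_exit[OF H] assms(2) by simp
  moreover have "?a \<le> l" "1 \<le> ?a - 1"
    using alpha_le_first_exit[OF H] first_exit_meets_S(1) last_entry_meets_S(1) assms(2) by auto
  ultimately have "S \<subseteq> bag X l ?a \<inter> bag X l (?a - 1)" unfolding bag_def by auto
  then show ?thesis unfolding T1set_def using H by blast
qed

lemma beta_in_T2set:
  assumes H: "S_branch V E S H" and "beta X l H < first_exit"
  shows "beta X l H \<in> T2set V E X l S"
proof -
  let ?b = "beta X l H"
  have "S \<subseteq> X ?b \<inter> X (?b + 1)"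
    using S_subset_bag last_entry_le_beta[OF H] assms(2) by simp
  moreover have "1 \<le> ?b" "?b + 1 \<le> l"
    using last_entry_le_beta[OF H] first_exit_meets_S(1) last_entry_meets_S(1) assms(2) by auto
  ultimately have "S \<subseteq> bag X l ?b \<inter> bag X l (?b + 1)" unfolding bag_def by auto
  then show ?thesis unfolding T2set_def using H by blast
qed

lemma finite_T1set: "finite (T1set V E X l S)"
  unfolding T1set_def using finite_S_branches by (auto intro: finite_subset[of _ "alpha X l ` _"])

lemma finite_T2set: "finite (T2set V E X l S)"
  unfolding T2set_def using finite_S_branches by (auto intro: finite_subset[of _ "beta X l ` _"])

lemma t1_le: "i \<in> T1set V E X l S \<Longrightarrow> t1 V E X l S \<le> i"
  unfolding t1_def by (rule Min_le[OF finite_T1set])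

lemma t2_ge: "i \<in> T2set V E X l S \<Longrightarrow> i \<le> t2 V E X l S"
  unfolding t2_def by (rule Max_ge[OF finite_T2set])

lemma green_inner_S_branch:
  obtains H where "S_branch V E S H" "green V E X l S H"
    "alpha X l H \<in> T1set V E X l S" "beta X l H \<in> T2set V E X l S"
proof -
  obtain H where H: "S_branch V E S H" "last_entry < alpha X l H" "beta X l H < first_exit"
    using inner_S_branch_exists by blast
  then have "alpha X l H \<in> T1set V E X l S" "beta X l H \<in> T2set V E X l S"
    using alpha_in_T1set beta_in_T2set by blast+
  moreover from this have "green V E X l S H"
    unfolding green_def using t1_le t2_ge alpha_le_beta meeting_bags_S_branch_nonempty H(1) by blast
  ultimately show thesis using that H(1) by blast
qed

lemma t1_le_t2: "t1 V E X l S \<le> t2 V E X l S"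
proof -
  obtain H where "green V E X l S H" by (rule green_inner_S_branch)
  then show ?thesis unfolding green_def by linarith
qed

lemma alpha_le_last_entry_if_before_t1:
  assumes H: "S_branch V E S H" and "alpha X l H < t1 V E X l S"
  shows "alpha X l H \<le> last_entry"
proof (rule ccontr)
  assume "\<not> alpha X l H \<le> last_entry"
  then have "t1 V E X l S \<le> alpha X l H" using alpha_in_T1set[OF H] t1_le by simp
  then show False using assms(2) by simp
qed

lemma first_exit_le_beta_if_after_t2:
  assumes H: "S_branch V E S H" and "t2 V E X l S < beta X l H"
  shows "first_exit \<le> beta X l H"
proof (rule ccontr)
  assume "\<not> first_exit \<le> beta X l H"
  then have "beta X l H \<le> t2 V E X l S" using beta_in_T2set[OF H] t2_ge by simp
  then show False using assms(2) by simp
qed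

lemma card_red_purple_gray_S_branches:
  "card {H. S_branch V E S H \<and> (red V E X l S H \<or> purple V E X l S H \<or> gray V E X l S H)}
    \<le> pd_width X l"
proof -
  have before_t1: "alpha X l H < t1 V E X l S"
    if "S_branch V E S H" "red V E X l S H \<or> purple V E X l S H \<or> gray V E X l S H" for H
    using that alpha_le_beta[OF meeting_bags_S_branch_nonempty]
    unfolding red_def purple_def gray_def by fastforce
  have "card {H. S_branch V E S H \<and> (red V E X l S H \<or> purple V E X l S H \<or> gray V E X l S H)}
      \<le> card {H. S_branch V E S H \<and> alpha X l H \<le> last_entry}"
    by (rule card_S_branches_mono) (rule alpha_le_last_entry_if_before_t1[OF _ before_t1])
  then show ?thesis using card_early_S_branches by linarith
qed

lemma card_blue_purple_black_S_branches:
  "card {H. S_branch V E S H \<and> (blue V E X l S H \<or> purple V E X l S H \<or> black V E X l S H)}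
    \<le> pd_width X l"
proof -
  have after_t2: "t2 V E X l S < beta X l H"
    if "S_branch V E S H" "blue V E X l S H \<or> purple V E X l S H \<or> black V E X l S H" for H
    using that alpha_le_beta[OF meeting_bags_S_branch_nonempty]
    unfolding blue_def purple_def black_def by fastforce
  have "card {H. S_branch V E S H \<and> (blue V E X l S H \<or> purple V E X l S H \<or> black V E X l S H)}
      \<le> card {H. S_branch V E S H \<and> first_exit \<le> beta X l H}"
    by (rule card_S_branches_mono) (rule first_exit_le_beta_if_after_t2[OF _ after_t2])
  then show ?thesis using card_late_S_branches by linarith
qed

end

theorem mainTheorem13:
  fixes V :: "'a set" and E :: "'a \<Rightarrow> 'a \<Rightarrow> bool"
    and X :: "nat \<Rightarrow> 'a set" and l :: nat and S :: "'a set"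
  assumes "graph V E" and "connected_graph V E"
    and "path_decomposition V E X l"
    and "pd_width X l \<le> 3"
    and "bottleneck V E S"
  shows "T1set V E X l S \<noteq> {} \<and> T2set V E X l S \<noteq> {}
    \<and> t1 V E X l S \<le> t2 V E X l S \<and> I_S V E X l S \<noteq> {}
    \<and> (\<exists>H. S_branch V E S H \<and> green V E X l S H)
    \<and> card {H. S_branch V E S H \<and> (red V E X l S H \<or> purple V E X l S H \<or> gray V E X l S H)}
        \<le> 2 * pd_width X l
    \<and> card {H. S_branch V E S H \<and> (blue V E X l S H \<or> purple V E X l S H \<or> black V E X l S H)}
        \<le> 2 * pd_width X l"
proof -
  interpret many_branched_separator V E X l S
    using assms unfolding bottleneck_def
    by unfold_locales (auto simp: path_decomposed_graph_def)
  obtain H where "S_branch V E S H" "green V E X l S H"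
    "alpha X l H \<in> T1set V E X l S" "beta X l H \<in> T2set V E X l S"
    by (rule green_inner_S_branch)
  then show ?thesis
    using t1_le_t2 card_red_purple_gray_S_branches card_blue_purple_black_S_branches
    unfolding I_S_def by fastforce
qed

end
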